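(* The system MaxSAT resolution $+$ cost-SR is sound: if from a MaxSAT instance with satisfiable hard clauses $H_0=\{C_1\lor b_1,\dots,C_m\lor b_m\}$ and soft clauses $S_0=\{\lnot b_1,\dots,\lnot b_m\}$ there is a MaxSAT resolution $+$ cost-SR derivation $(H_0,S_0),\dots,(H_t,S_t)$ such that $S_t$ contains the empty clause $\bot$ with multiplicity $k$, then every assignment satisfying $H_0$ falsifies at least $k$ clauses of $S_0$; equivalently $\mathrm{cost}(H_0)\ge k$.
   Context: $b_1,\dots,b_m$ are distinct blocking variables not occurring in $C_1,\dots,C_m$; $\mathrm{cost}(\alpha)=\sum_i\alpha(b_i)$, $\mathrm{cost}(H)=\min\{\mathrm{cost}(\alpha):\alpha\text{ total},\alpha\models H\}$. Notation: substitutions map variables to $0,1$ or literals ($\sigma(\lnot x)=\lnot\sigma(x)$); $(\sigma\circ\tau)(x)=\sigma(\tau(x))$; $C{\upharpoonright}_\sigma$ and $\Gamma{\upharpoonright}_\sigma$ denote restriction (clauses set to $1$ removed); $\lnot C$ is the partial assignment falsifying all literals of $C$; $\Gamma\vdash_1 C$ means unit propagation on $\Gamma{\upharpoonright}_{\lnot C}$ derives $\bot$, and $\Gamma\vdash_1\Delta$ means this for all $D\in\Delta$. $C$ is cost-SR w.r.t. $\Gamma$ if some substitution $\sigma$ satisfies (1) $\Gamma{\upharpoonright}_{\lnot C}\vdash_1(\Gamma\cup\{C\}){\upharpoonright}_\sigma$ and (2) $\mathrm{cost}(\tau\circ\sigma)\le\mathrm{cost}(\tau)$ for all total $\tau\supseteq\lnot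 C$. A MaxSAT resolution $+$ cost-SR derivation is a sequence of pairs of multisets $(H_i,S_i)$ where each step is one of: (a) $S_i=S_{i-1}$, $H_i=H_{i-1}\cup\{C\}$ with $C$ obtained by resolution (or weakening) from $H_{i-1}$; (a') $S_i=S_{i-1}$, $H_i=H_{i-1}\cup\{C\}$ with $C$ cost-SR w.r.t. $H_{i-1}$; (b) $S_i=S_{i-1}\cup\{C\}$ for some $C\in H_{i-1}$, $H_i=H_{i-1}$; (c) $S_i=S_{i-1}\setminus\{C\}\cup\{C\lor x,C\lor\lnot x\}$ for $C\in S_{i-1}$, $H_i=H_{i-1}$; (d) $S_i=S_{i-1}\setminus\{C\lor x,C\lor\lnot x\}\cup\{C\}$ for $\{C\lor x,C\lor\lnot x\}\subseteq S_{i-1}$, $H_i=H_{i-1}$. *)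

theory Defs
  imports "HOL-Library.Multiset"
begin

datatype 'v lit = Pos 'v | Neg 'v

fun lneg :: "'v lit \<Rightarrow> 'v lit" where
  "lneg (Pos x) = Neg x"
| "lneg (Neg x) = Pos x"

type_synonym 'v clause = "'v lit set"

fun lit_val :: "('v \<Rightarrow> bool) \<Rightarrow> 'v lit \<Rightarrow> bool" where
  "lit_val \<alpha> (Pos x) = \<alpha> x"
| "lit_val \<alpha> (Neg x) = (\<not> \<alpha> x)"

definition sat_clause :: "('v \<Rightarrow> bool) \<Rightarrow> 'v clause \<Rightarrow> bool" where
  "sat_clause \<alpha> C \<longleftrightarrow> (\<exists>l\<in>C. lit_val \<alpha> l)"

definition sat_mset :: "('v \<Rightarrow> bool) \<Rightarrow> 'v clause multiset \<Rightarrow> bool" where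
  "sat_mset \<alpha> F \<longleftrightarrow> (\<forall>C\<in>#F. sat_clause \<alpha> C)"

datatype 'v slit = Const bool | Lit "'v lit"

fun sneg :: "'v slit \<Rightarrow> 'v slit" where
  "sneg (Const b) = Const (\<not> b)"
| "sneg (Lit l) = Lit (lneg l)"

type_synonym 'v subst = "'v \<Rightarrow> 'v slit"

fun subst_lit :: "'v subst \<Rightarrow> 'v lit \<Rightarrow> 'v slit" where
  "subst_lit \<sigma> (Pos x) = \<sigma> x"
| "subst_lit \<sigma> (Neg x) = sneg (\<sigma> x)"

definition subst_sat :: "'v subst \<Rightarrow> 'v clause \<Rightarrow> bool" where
  "subst_sat \<sigma> C \<longleftrightarrow> (\<exists>l\<in>C. subst_lit \<sigma> l = Const True)"

definition subst_clause :: "'v subst \<Rightarrow> 'v clause \<Rightarrow> 'v clause" where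
  "subst_clause \<sigma> C = {l'. \<exists>l\<in>C. subst_lit \<sigma> l = Lit l'}"

definition restrict :: "'v clause set \<Rightarrow> 'v subst \<Rightarrow> 'v clause set" where
  "restrict \<Gamma> \<sigma> = {subst_clause \<sigma> D | D. D \<in> \<Gamma> \<and> \<not> subst_sat \<sigma> D}"

text \<open>The partial assignment \<open>\<not>C\<close> falsifying all literals of C, as a substitution
  (identity on variables not occurring in C).\<close>
definition negC :: "'v clause \<Rightarrow> 'v subst" where
  "negC C x = (if Pos x \<in> C then Const False else if Neg x \<in> C then Const True else Lit (Pos x))"

fun slit_val :: "('v \<Rightarrow> bool) \<Rightarrow> 'v slit \<Rightarrow> bool" where
  "slit_val \<tau> (Const b) = b"
| "slit_val \<tau> (Lit l) = lit_val \<tau> l"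

definition comp_assign :: "('v \<Rightarrow> bool) \<Rightarrow> 'v subst \<Rightarrow> ('v \<Rightarrow> bool)" where
  "comp_assign \<tau> \<sigma> = (\<lambda>x. slit_val \<tau> (\<sigma> x))"

definition extends_negC :: "('v \<Rightarrow> bool) \<Rightarrow> 'v clause \<Rightarrow> bool" where
  "extends_negC \<tau> C \<longleftrightarrow> (\<forall>l\<in>C. \<not> lit_val \<tau> l)"

inductive up_refutes :: "'v clause set \<Rightarrow> bool" where
  up_empty: "{} \<in> F \<Longrightarrow> up_refutes F"
| up_unit: "{l} \<in> F \<Longrightarrow> up_refutes (restrict F (negC {lneg l})) \<Longrightarrow> up_refutes F"

definition up_implies :: "'v clause set \<Rightarrow> 'v clause \<Rightarrow> bool" where
  "up_implies \<Gamma> D \<longleftrightarrow> up_refutes (restrict \<Gamma> (negC D))"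

text \<open>Blocking variables are \<open>b 0, \<dots>, b (m-1)\<close>.\<close>
definition cost_assign :: "(nat \<Rightarrow> 'v) \<Rightarrow> nat \<Rightarrow> ('v \<Rightarrow> bool) \<Rightarrow> nat" where
  "cost_assign b m \<alpha> = (\<Sum>i<m. if \<alpha> (b i) then 1 else 0)"

definition cost_hard :: "(nat \<Rightarrow> 'v) \<Rightarrow> nat \<Rightarrow> 'v clause multiset \<Rightarrow> nat" where
  "cost_hard b m H = (LEAST c. \<exists>\<alpha>. sat_mset \<alpha> H \<and> cost_assign b m \<alpha> = c)"

definition cost_SR :: "(nat \<Rightarrow> 'v) \<Rightarrow> nat \<Rightarrow> 'v clause multiset \<Rightarrow> 'v clause \<Rightarrow> bool" where
  "cost_SR b m \<Gamma> C \<longleftrightarrow> (\<exists>\<sigma>.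
     (\<forall>D\<in>restrict (set_mset \<Gamma> \<union> {C}) \<sigma>. up_implies (restrict (set_mset \<Gamma>) (negC C)) D) \<and>
     (\<forall>\<tau>. extends_negC \<tau> C \<longrightarrow> cost_assign b m (comp_assign \<tau> \<sigma>) \<le> cost_assign b m \<tau>))"

definition res_or_weak :: "'v clause multiset \<Rightarrow> 'v clause \<Rightarrow> bool" where
  "res_or_weak H C \<longleftrightarrow>
     (\<exists>D E x. D \<in># H \<and> E \<in># H \<and> Pos x \<in> D \<and> Neg x \<in> E \<and>
        C = (D - {Pos x}) \<union> (E - {Neg x})) \<or>
     (\<exists>D. D \<in># H \<and> D \<subseteq> C \<and> finite C)"

text \<open>One step of a MaxSAT resolution + cost-SR derivation, rules (a), (a'), (b), (c), (d).
  \<open>C \<or> x\<close> is \<open>insert (Pos x) C\<close>.\<close>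
definition deriv_step :: "(nat \<Rightarrow> 'v) \<Rightarrow> nat \<Rightarrow>
    'v clause multiset \<Rightarrow> 'v clause multiset \<Rightarrow> 'v clause multiset \<Rightarrow> 'v clause multiset \<Rightarrow> bool" where
  "deriv_step b m H S H' S' \<longleftrightarrow>
     (S' = S \<and> (\<exists>C. res_or_weak H C \<and> H' = add_mset C H)) \<or>
     (S' = S \<and> (\<exists>C. finite C \<and> cost_SR b m H C \<and> H' = add_mset C H)) \<or>
     (H' = H \<and> (\<exists>C. C \<in># H \<and> S' = add_mset C S)) \<or>
     (H' = H \<and> (\<exists>C x. C \<in># S \<and>
         S' = add_mset (insert (Pos x) C) (add_mset (insert (Neg x) C) (S - {#C#})))) \<or>
     (H' = H \<and> (\<exists>C x. {#insert (Pos x) C, insert (Neg x) C#} \<subseteq># S \<and>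
         S' = add_mset C (S - {#insert (Pos x) C, insert (Neg x) C#})))"

end

theory Submission
  imports Defs
begin

text \<open>Two invariants along a derivation give soundness. First, every assignment \<open>\<alpha>\<close> satisfying
  \<open>H\<^sub>0\<close> can be traded for an assignment satisfying \<open>H\<^sub>i\<close> of no larger cost: resolution and
  weakening are sound, and if \<open>\<alpha>\<close> falsifies a cost-SR clause \<open>C\<close> with witness \<open>\<sigma>\<close>, then
  \<open>\<alpha> \<circ> \<sigma>\<close> satisfies \<open>H \<union> {C}\<close> (because unit propagation is sound) and is not more costly.
  Second, since \<open>H\<^sub>0 \<subseteq> H\<^sub>i\<close>, an assignment satisfying \<open>H\<^sub>i\<close> falsifies as many clauses of
  \<open>S\<^sub>i\<close> as of \<open>S\<^sub>0\<close>: rule (b) only adds satisfied clauses, and splitting or merging on a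
  variable \<open>x\<close> does not change the number of falsified clauses. As the empty clause is always
  falsified and the falsified clauses of \<open>S\<^sub>0 = {\<not>b\<^sub>1, \<dots>, \<not>b\<^sub>m}\<close> are counted by the cost,
  \<open>k \<le> cost \<beta> \<le> cost \<alpha>\<close>.\<close>

lemma lit_val_lneg [simp]: "lit_val \<alpha> (lneg l) \<longleftrightarrow> \<not> lit_val \<alpha> l"
  by (cases l) auto

lemma slit_val_sneg [simp]: "slit_val \<tau> (sneg s) \<longleftrightarrow> \<not> slit_val \<tau> s"
  by (cases s) auto

lemma lit_val_comp_assign: "lit_val (comp_assign \<tau> \<sigma>) l = slit_val \<tau> (subst_lit \<sigma> l)"
  by (cases l) (simp_all add: comp_assign_def)

lemma sat_clause_insert: "sat_clause \<alpha> (insert l C) \<longleftrightarrow> lit_val \<alpha> l \<or> sat_clause \<alpha> C"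
  by (auto simp: sat_clause_def)

lemma sat_mset_mono: "H \<subseteq># H' \<Longrightarrow> sat_mset \<alpha> H' \<Longrightarrow> sat_mset \<alpha> H"
  by (auto simp: sat_mset_def dest: mset_subset_eqD)

lemma sat_clause_comp_assign_iff:
  "sat_clause (comp_assign \<tau> \<sigma>) D \<longleftrightarrow> subst_sat \<sigma> D \<or> sat_clause \<tau> (subst_clause \<sigma> D)"
proof -
  have "lit_val (comp_assign \<tau> \<sigma>) l \<longleftrightarrow>
      subst_lit \<sigma> l = Const True \<or> (\<exists>l'. subst_lit \<sigma> l = Lit l' \<and> lit_val \<tau> l')" for l
    unfolding lit_val_comp_assign by (cases "subst_lit \<sigma> l") auto
  then show ?thesis
    unfolding sat_clause_def subst_sat_def subst_clause_def by blast
qed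

lemma sat_comp_assign_if_sat_restrict:
  assumes "\<forall>D\<in>restrict \<Gamma> \<sigma>. sat_clause \<tau> D" "D \<in> \<Gamma>"
  shows "sat_clause (comp_assign \<tau> \<sigma>) D"
  using assms unfolding sat_clause_comp_assign_iff restrict_def by blast

lemma subst_lit_negC_if_true:
  assumes "extends_negC \<alpha> E" "lit_val \<alpha> l" "subst_lit (negC E) l \<noteq> Const True"
  shows "subst_lit (negC E) l = Lit l"
  using assms by (cases l) (auto simp: negC_def extends_negC_def split: if_splits)

lemma sat_restrict_negC:
  assumes "\<forall>D\<in>F. sat_clause \<alpha> D" "extends_negC \<alpha> E" "D \<in> restrict F (negC E)"
  shows "sat_clause \<alpha> D"
proof -
  obtain D0 where D: "D = subst_clause (negC E) D0" "D0 \<in> F" "\<not> subst_sat (negC E) D0"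
    using assms(3) unfolding restrict_def by blast
  then obtain l where l: "l \<in> D0" "lit_val \<alpha> l"
    using assms(1) unfolding sat_clause_def by blast
  with D(3) have "subst_lit (negC E) l \<noteq> Const True"
    unfolding subst_sat_def by blast
  with assms(2) l(2) have "subst_lit (negC E) l = Lit l"
    by (rule subst_lit_negC_if_true)
  with D(1) l show ?thesis
    unfolding sat_clause_def subst_clause_def by blast
qed

lemma up_refutes_unsat: "up_refutes F \<Longrightarrow> \<exists>D\<in>F. \<not> sat_clause \<alpha> D"
proof (induction rule: up_refutes.induct)
  case (up_empty F)
  then show ?case by (auto simp: sat_clause_def)
next
  case (up_unit l F)
  show ?case
  proof (rule ccontr)
    assume "\<not> (\<exists>D\<in>F. \<not> sat_clause \<alpha> D)"
    moreover from this \<open>{l} \<in> F\<close> have "extends_negC \<alpha> {lneg l}"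
      by (auto simp: sat_clause_def extends_negC_def)
    ultimately show False
      using up_unit.IH sat_restrict_negC by blast
  qed
qed

lemma up_implies_sound:
  assumes "up_implies \<Gamma> D" "\<forall>E\<in>\<Gamma>. sat_clause \<alpha> E"
  shows "sat_clause \<alpha> D"
proof (rule ccontr)
  assume "\<not> sat_clause \<alpha> D"
  then have "extends_negC \<alpha> D"
    by (auto simp: sat_clause_def extends_negC_def)
  with assms show False
    unfolding up_implies_def by (meson sat_restrict_negC up_refutes_unsat)
qed

lemma res_or_weak_sound: "sat_mset \<alpha> H \<Longrightarrow> res_or_weak H C \<Longrightarrow> sat_clause \<alpha> C"
  unfolding res_or_weak_def sat_mset_def sat_clause_def
  by (metis DiffI UnCI lit.distinct(1) lit_val.simps singletonD subsetD)

lemma cost_SR_sound: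
  assumes sat: "sat_mset \<alpha> H" and sr: "cost_SR b m H C"
  obtains \<beta> where "sat_mset \<beta> (add_mset C H)" "cost_assign b m \<beta> \<le> cost_assign b m \<alpha>"
proof (cases "sat_clause \<alpha> C")
  case True
  with sat that show ?thesis by (auto simp: sat_mset_def)
next
  case False
  then have neg: "extends_negC \<alpha> C"
    by (auto simp: sat_clause_def extends_negC_def)
  obtain \<sigma> where
    red: "\<forall>D\<in>restrict (set_mset H \<union> {C}) \<sigma>. up_implies (restrict (set_mset H) (negC C)) D" and
    cost: "\<forall>\<tau>. extends_negC \<tau> C \<longrightarrow> cost_assign b m (comp_assign \<tau> \<sigma>) \<le> cost_assign b m \<tau>"
    using sr unfolding cost_SR_def by blast
  have "\<forall>E\<in>restrict (set_mset H) (negC C). sat_clause \<alpha> E"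
    using sat neg sat_restrict_negC by (auto simp: sat_mset_def)
  with red have "\<forall>D\<in>restrict (set_mset H \<union> {C}) \<sigma>. sat_clause \<alpha> D"
    using up_implies_sound by blast
  then have "sat_mset (comp_assign \<alpha> \<sigma>) (add_mset C H)"
    using sat_comp_assign_if_sat_restrict by (fastforce simp: sat_mset_def)
  with cost neg that show ?thesis by blast
qed

definition num_falsified :: "('v \<Rightarrow> bool) \<Rightarrow> 'v clause multiset \<Rightarrow> nat" where
  "num_falsified \<alpha> S = size (filter_mset (\<lambda>D. \<not> sat_clause \<alpha> D) S)"

lemma num_falsified_empty [simp]: "num_falsified \<alpha> {#} = 0"
  by (simp add: num_falsified_def)

lemma num_falsified_add_mset [simp]:
  "num_falsified \<alpha> (add_mset C S) = (if sat_clause \<alpha> C then 0 else 1) + num_falsified \<alpha> S"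
  by (simp add: num_falsified_def)

lemma num_falsified_union [simp]:
  "num_falsified \<alpha> (A + B) = num_falsified \<alpha> A + num_falsified \<alpha> B"
  by (simp add: num_falsified_def)

lemma num_falsified_diff:
  "A \<subseteq># S \<Longrightarrow> num_falsified \<alpha> S = num_falsified \<alpha> A + num_falsified \<alpha> (S - A)"
  by (metis num_falsified_union subset_mset.add_diff_inverse)

lemma count_empty_le_num_falsified: "count S {} \<le> num_falsified \<alpha> S"
proof -
  have "count S {} = count (filter_mset (\<lambda>D. \<not> sat_clause \<alpha> D) S) {}"
    by (simp add: sat_clause_def)
  also have "\<dots> \<le> num_falsified \<alpha> S"
    unfolding num_falsified_def by (rule count_le_size)
  finally show ?thesis .
qed

lemma num_falsified_blocking:
  "num_falsified \<alpha> (mset (map (\<lambda>i. {Neg (b i)}) [0..<m])) = cost_assign b m \<alpha>"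
  by (induction m) (auto simp: sat_clause_def cost_assign_def num_falsified_def)

lemma deriv_step_hard_subset: "deriv_step b m H S H' S' \<Longrightarrow> H \<subseteq># H'"
  unfolding deriv_step_def by auto

lemma deriv_step_num_falsified:
  assumes step: "deriv_step b m H S H' S'" and sat: "sat_mset \<alpha> H'"
  shows "num_falsified \<alpha> S' = num_falsified \<alpha> S"
proof -
  have sat_H: "sat_mset \<alpha> H"
    using sat_mset_mono[OF deriv_step_hard_subset[OF step] sat] .
  consider (hard) "S' = S"
    | (add) C where "C \<in># H" "S' = add_mset C S"
    | (split) C x where "C \<in># S"
        "S' = add_mset (insert (Pos x) C) (add_mset (insert (Neg x) C) (S - {#C#}))"
    | (merge) C x where "{#insert (Pos x) C, insert (Neg x) C#} \<subseteq># S"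
        "S' = add_mset C (S - {#insert (Pos x) C, insert (Neg x) C#})"
    using step unfolding deriv_step_def by blast
  then show ?thesis
  proof cases
    case hard
    then show ?thesis by simp
  next
    case add
    with sat_H show ?thesis by (auto simp: sat_mset_def)
  next
    case (split C x)
    have "num_falsified \<alpha> S = num_falsified \<alpha> {#C#} + num_falsified \<alpha> (S - {#C#})"
      using split(1) by (intro num_falsified_diff) simp
    with split(2) show ?thesis
      by (auto simp: sat_clause_insert)
  next
    case (merge C x)
    have "num_falsified \<alpha> S = num_falsified \<alpha> {#insert (Pos x) C, insert (Neg x) C#}
        + num_falsified \<alpha> (S - {#insert (Pos x) C, insert (Neg x) C#})"
      using merge(1) by (rule num_falsified_diff)
    with merge(2) show ?thesis
      by (auto simp: sat_clause_insert)
  qed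
qed

lemma deriv_step_cost:
  assumes step: "deriv_step b m H S H' S'" and sat: "sat_mset \<alpha> H"
  obtains \<beta> where "sat_mset \<beta> H'" "cost_assign b m \<beta> \<le> cost_assign b m \<alpha>"
proof -
  consider (res) C where "res_or_weak H C" "H' = add_mset C H"
    | (sr) C where "cost_SR b m H C" "H' = add_mset C H"
    | (soft) "H' = H"
    using step unfolding deriv_step_def by blast
  then show ?thesis
  proof cases
    case res
    with sat have "sat_mset \<alpha> H'"
      using res_or_weak_sound by (auto simp: sat_mset_def)
    with that show ?thesis by blast
  next
    case (sr C)
    obtain \<beta> where "sat_mset \<beta> (add_mset C H)" "cost_assign b m \<beta> \<le> cost_assign b m \<alpha>"
      using cost_SR_sound[OF sat sr(1)] by blast
    with sr(2) that show ?thesis by simp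
  next
    case soft
    with sat that show ?thesis by blast
  qed
qed

lemma derivation_cost:
  assumes deriv: "\<forall>i<t. deriv_step b m (H i) (S i) (H (Suc i)) (S (Suc i))"
    and sat: "sat_mset \<alpha> (H 0)" and "i \<le> t"
  shows "\<exists>\<beta>. sat_mset \<beta> (H i) \<and> cost_assign b m \<beta> \<le> cost_assign b m \<alpha>"
  using \<open>i \<le> t\<close>
proof (induction i)
  case 0
  with sat show ?case by blast
next
  case (Suc i)
  then obtain \<beta> where \<beta>: "sat_mset \<beta> (H i)" "cost_assign b m \<beta> \<le> cost_assign b m \<alpha>"
    by auto
  have step: "deriv_step b m (H i) (S i) (H (Suc i)) (S (Suc i))"
    using deriv Suc.prems by simp
  obtain \<beta>' where "sat_mset \<beta>' (H (Suc i))" "cost_assign b m \<beta>' \<le> cost_assign b m \<beta>"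
    using deriv_step_cost[OF step \<beta>(1)] by blast
  with \<beta>(2) show ?case
    using order_trans by blast
qed

lemma derivation_num_falsified:
  assumes deriv: "\<forall>i<t. deriv_step b m (H i) (S i) (H (Suc i)) (S (Suc i))"
    and "sat_mset \<beta> (H i)" and "i \<le> t"
  shows "num_falsified \<beta> (S i) = num_falsified \<beta> (S 0)"
  using assms(2,3)
proof (induction i)
  case 0
  then show ?case by simp
next
  case (Suc i)
  have step: "deriv_step b m (H i) (S i) (H (Suc i)) (S (Suc i))"
    using deriv Suc.prems(2) by simp
  have sat_i: "sat_mset \<beta> (H i)"
    using sat_mset_mono[OF deriv_step_hard_subset[OF step] Suc.prems(1)] .
  have "num_falsified \<beta> (S (Suc i)) = num_falsified \<beta> (S i)"
    using deriv_step_num_falsified[OF step Suc.prems(1)] .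
  also have "\<dots> = num_falsified \<beta> (S 0)"
    using Suc.IH sat_i Suc.prems(2) by simp
  finally show ?case .
qed

lemma derivation_sound:
  assumes deriv: "\<forall>i<t. deriv_step b m (H i) (S i) (H (Suc i)) (S (Suc i))"
    and sat: "sat_mset \<alpha> (H 0)"
  obtains \<beta> where "cost_assign b m \<beta> \<le> cost_assign b m \<alpha>"
    and "count (S t) {} \<le> num_falsified \<beta> (S 0)"
proof -
  obtain \<beta> where sat_t: "sat_mset \<beta> (H t)" and cost: "cost_assign b m \<beta> \<le> cost_assign b m \<alpha>"
    using derivation_cost[OF deriv sat order.refl] by blast
  have "count (S t) {} \<le> num_falsified \<beta> (S t)"
    by (rule count_empty_le_num_falsified)
  also have "\<dots> = num_falsified \<beta> (S 0)"
    using derivation_num_falsified[OF deriv sat_t order.refl] .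
  finally show ?thesis
    using that cost by blast
qed

lemma cost_hard_attained:
  assumes "\<exists>\<alpha>. sat_mset \<alpha> H"
  obtains \<alpha> where "sat_mset \<alpha> H" "cost_assign b m \<alpha> = cost_hard b m H"
proof -
  from assms have ex: "\<exists>c \<alpha>. sat_mset \<alpha> H \<and> cost_assign b m \<alpha> = c"
    by blast
  show ?thesis
    using LeastI_ex[OF ex] that unfolding cost_hard_def by blast
qed

theorem theorem7p4:
  fixes C :: "nat \<Rightarrow> 'v clause" and b :: "nat \<Rightarrow> 'v" and m :: nat
    and H S :: "nat \<Rightarrow> 'v clause multiset" and t k :: nat
  assumes fin: "\<forall>i<m. finite (C i)"
    and b_inj: "inj_on b {..<m}"
    and b_fresh: "\<forall>i<m. \<forall>j<m. Pos (b i) \<notin> C j \<and> Neg (b i) \<notin> C j"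
    and H0: "H 0 = mset (map (\<lambda>i. insert (Pos (b i)) (C i)) [0..<m])"
    and S0: "S 0 = mset (map (\<lambda>i. {Neg (b i)}) [0..<m])"
    and H0_sat: "\<exists>\<alpha>. sat_mset \<alpha> (H 0)"
    and deriv: "\<forall>i<t. deriv_step b m (H i) (S i) (H (Suc i)) (S (Suc i))"
    and empty_k: "count (S t) {} = k"
  shows "(\<forall>\<alpha>. sat_mset \<alpha> (H 0) \<longrightarrow>
            k \<le> size (filter_mset (\<lambda>D. \<not> sat_clause \<alpha> D) (S 0)))
         \<and> k \<le> cost_hard b m (H 0)"
proof -
  have cost_eq: "num_falsified \<alpha> (S 0) = cost_assign b m \<alpha>" for \<alpha>
    unfolding S0 by (rule num_falsified_blocking)
  have k_le_cost: "k \<le> cost_assign b m \<alpha>" if sat: "sat_mset \<alpha> (H 0)" for \<alpha>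
  proof -
    obtain \<beta> where "cost_assign b m \<beta> \<le> cost_assign b m \<alpha>" "k \<le> num_falsified \<beta> (S 0)"
      using derivation_sound[OF deriv sat] empty_k by blast
    with cost_eq show ?thesis by simp
  qed
  obtain \<alpha>\<^sub>0 where opt: "sat_mset \<alpha>\<^sub>0 (H 0)" "cost_assign b m \<alpha>\<^sub>0 = cost_hard b m (H 0)"
    using cost_hard_attained H0_sat by blast
  have "k \<le> cost_hard b m (H 0)"
    using k_le_cost[OF opt(1)] opt(2) by simp
  moreover have "k \<le> size (filter_mset (\<lambda>D. \<not> sat_clause \<alpha> D) (S 0))"
    if "sat_mset \<alpha> (H 0)" for \<alpha>
    using k_le_cost[OF that] cost_eq[of \<alpha>] by (simp add: num_falsified_def)
  ultimately show ?thesis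
    by blast
qed

end
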